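(* Let $\mathcal{Z}\subset\mathbb{R}^d$, let $\pi$ be a probability distribution on $\mathcal{Z}$, let $\ell:\mathcal{Z}\times\mathcal{Z}\to[0,1]$ be a normalized error function, and let $N$ be the training set size. Let $M$ be a randomized training mechanism mapping datasets in $\mathcal{Z}^N$ to weights $\theta\in\Theta$. For a reconstruction attack $\mathcal{R}:\Theta\to\mathcal{Z}$ define $$TPR_{cum}(\tau)=\mathbb{P}\Big[\min_{Z\in\mathcal{D}_N}\ell(Z,\mathcal{R}(\theta))<\tau\Big]\ \text{with}\ \mathcal{D}_N\sim\pi^{N},\ \theta\sim M(\mathcal{D}_N),$$ $$FPR_{cum}(\tau)=\mathbb{P}\Big[\min_{Z\in\mathcal{D}_N}\ell(Z,\mathcal{R}(\theta))<\tau\Big]\ \text{with}\ \mathcal{D}_N\sim\pi^{N},\ \mathcal{D}_N'\sim\pi^{N}\ \text{independent},\ \theta\sim M(\mathcal{D}_N').$$ Assume there exists $Z_0\in\mathcal{Z}$ such that $\kappa_\tau(Z_0):=\mathbb{P}_{Z\sim\pi}[\ell(Z,Z_0)\le\tau]$ satisfies $0<\kappa_\tau(Z_0)<1$ for every $\tau\in(0,1)$. Define the baseline attack $\mathcal{R}_0(\theta)=Z_0$ for all $\theta$. Then for every $\tau\in(0,1)$, for this attack, $$TPR_{cum}(\tau)\xrightarrow{N\to\infty}1,\qquad FPR_{cum}(\tau)\xrightarrow{N\to\infty}1.$$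
   Context: $\pi^N$ denotes the product distribution (training set of $N$ i.i.d. samples from $\pi$). *)

theory Defs
  imports "HOL-Probability.Probability"
begin

definition data_dist :: "'a measure \<Rightarrow> nat \<Rightarrow> (nat \<Rightarrow> 'a) measure" where
  "data_dist \<pi> N = PiM {..<N} (\<lambda>_. \<pi>)"

definition min_err :: "('a \<Rightarrow> 'a \<Rightarrow> real) \<Rightarrow> nat \<Rightarrow> (nat \<Rightarrow> 'a) \<Rightarrow> 'a \<Rightarrow> real" where
  "min_err l N D z = Min ((\<lambda>i. l (D i) z) ` {..<N})"

definition TPR_cum :: "'a measure \<Rightarrow> 'b measure \<Rightarrow> (nat \<Rightarrow> (nat \<Rightarrow> 'a) \<Rightarrow> 'b measure)
    \<Rightarrow> ('b \<Rightarrow> 'a) \<Rightarrow> ('a \<Rightarrow> 'a \<Rightarrow> real) \<Rightarrow> nat \<Rightarrow> real \<Rightarrow> real" where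
  "TPR_cum \<pi> \<Theta> M R l N \<tau> =
     measure (data_dist \<pi> N \<bind> (\<lambda>D. M N D \<bind> (\<lambda>\<theta>. return (data_dist \<pi> N \<Otimes>\<^sub>M \<Theta>) (D, \<theta>))))
       {(D, \<theta>) \<in> space (data_dist \<pi> N \<Otimes>\<^sub>M \<Theta>). min_err l N D (R \<theta>) < \<tau>}"

definition FPR_cum :: "'a measure \<Rightarrow> 'b measure \<Rightarrow> (nat \<Rightarrow> (nat \<Rightarrow> 'a) \<Rightarrow> 'b measure)
    \<Rightarrow> ('b \<Rightarrow> 'a) \<Rightarrow> ('a \<Rightarrow> 'a \<Rightarrow> real) \<Rightarrow> nat \<Rightarrow> real \<Rightarrow> real" where
  "FPR_cum \<pi> \<Theta> M R l N \<tau> =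
     measure ((data_dist \<pi> N \<Otimes>\<^sub>M data_dist \<pi> N) \<bind>
                (\<lambda>(D, D'). M N D' \<bind> (\<lambda>\<theta>. return (data_dist \<pi> N \<Otimes>\<^sub>M \<Theta>) (D, \<theta>))))
       {(D, \<theta>) \<in> space (data_dist \<pi> N \<Otimes>\<^sub>M \<Theta>). min_err l N D (R \<theta>) < \<tau>}"

definition kappa :: "'a measure \<Rightarrow> ('a \<Rightarrow> 'a \<Rightarrow> real) \<Rightarrow> real \<Rightarrow> 'a \<Rightarrow> real" where
  "kappa \<pi> l \<tau> z0 = measure \<pi> {z \<in> space \<pi>. l z z0 \<le> \<tau>}"

end

theory Submission
  imports Defs
begin

text \<open>For the constant attack \<open>\<R>\<^sub>0 \<equiv> Z\<^sub>0\<close> the weights \<open>\<theta>\<close> are irrelevant, so both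
  \<open>TPR\<^sub>c\<^sub>u\<^sub>m(\<tau>)\<close> and \<open>FPR\<^sub>c\<^sub>u\<^sub>m(\<tau>)\<close> equal the probability that one of \<open>N\<close> i.i.d. samples from
  \<open>\<pi>\<close> lies in \<open>S = {Z. \<ell>(Z, Z\<^sub>0) < \<tau>}\<close>, which is \<open>1 - (1 - \<pi>(S))\<^sup>N\<close>. Since
  \<open>\<pi>(S) \<ge> \<kappa>\<^bsub>\<tau>/2\<^esub>(Z\<^sub>0) > 0\<close>, this tends to \<open>1\<close>.\<close>

lemma emeasure_bind_return_pair:
  assumes P: "prob_space P" and K: "K \<in> measurable P (prob_algebra T)"
    and g: "g \<in> measurable P D" and A: "A \<in> sets D"
  shows "emeasure (P \<bind> (\<lambda>x. K x \<bind> (\<lambda>t. return (D \<Otimes>\<^sub>M T) (g x, t)))) (A \<times> space T)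
       = emeasure P {x\<in>space P. g x \<in> A}"
proof -
  have Ks: "K \<in> measurable P (subprob_algebra T)" using K by (rule measurable_prob_algebraD)
  have ret: "(\<lambda>y. return (D \<Otimes>\<^sub>M T) (g (fst y), snd y)) \<in> measurable (P \<Otimes>\<^sub>M T) (subprob_algebra (D \<Otimes>\<^sub>M T))"
    using g by measurable
  have bind_meas: "(\<lambda>x. K x \<bind> (\<lambda>t. return (D \<Otimes>\<^sub>M T) (g x, t))) \<in> measurable P (subprob_algebra (D \<Otimes>\<^sub>M T))"
    by (rule measurable_bind[OF Ks]) (use ret in simp)
  have AT: "A \<times> space T \<in> sets (D \<Otimes>\<^sub>M T)" using A by auto
  have inner: "emeasure (K x \<bind> (\<lambda>t. return (D \<Otimes>\<^sub>M T) (g x, t))) (A \<times> space T) = indicator A (g x)"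
    if x: "x \<in> space P" for x
  proof -
    have "K x \<in> space (prob_algebra T)" using K x by (rule measurable_space)
    then have Kx: "prob_space (K x)" and sets_Kx: "sets (K x) = sets T"
      by (auto simp: space_prob_algebra)
    have space_Kx: "space (K x) = space T" using sets_Kx by (rule sets_eq_imp_space_eq)
    have ret_x: "(\<lambda>t. return (D \<Otimes>\<^sub>M T) (g x, t)) \<in> measurable (K x) (subprob_algebra (D \<Otimes>\<^sub>M T))"
      using measurable_space[OF g x] by (simp add: measurable_cong_sets[OF sets_Kx refl]) measurable
    have "emeasure (K x \<bind> (\<lambda>t. return (D \<Otimes>\<^sub>M T) (g x, t))) (A \<times> space T)
        = \<integral>\<^sup>+t. emeasure (return (D \<Otimes>\<^sub>M T) (g x, t)) (A \<times> space T) \<partial>K x"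
      using prob_space.not_empty[OF Kx] ret_x AT by (rule emeasure_bind)
    also have "\<dots> = \<integral>\<^sup>+t. indicator A (g x) \<partial>K x"
      using AT by (intro nn_integral_cong) (auto simp: space_Kx indicator_def)
    also have "\<dots> = indicator A (g x)"
      using Kx by (simp add: prob_space.emeasure_space_1)
    finally show ?thesis .
  qed
  have "emeasure (P \<bind> (\<lambda>x. K x \<bind> (\<lambda>t. return (D \<Otimes>\<^sub>M T) (g x, t)))) (A \<times> space T)
      = \<integral>\<^sup>+x. emeasure (K x \<bind> (\<lambda>t. return (D \<Otimes>\<^sub>M T) (g x, t))) (A \<times> space T) \<partial>P"
    using prob_space.not_empty[OF P] bind_meas AT by (rule emeasure_bind)
  also have "\<dots> = \<integral>\<^sup>+x. indicator {x\<in>space P. g x \<in> A} x \<partial>P"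
    by (intro nn_integral_cong) (auto simp: inner indicator_def)
  also have "\<dots> = emeasure P {x\<in>space P. g x \<in> A}"
    using measurable_sets[OF g A] by (simp add: vimage_def Int_def conj_commute)
  finally show ?thesis .
qed

lemma measure_bind_return_pair:
  assumes "prob_space P" "K \<in> measurable P (prob_algebra T)" "g \<in> measurable P D" "A \<in> sets D"
  shows "measure (P \<bind> (\<lambda>x. K x \<bind> (\<lambda>t. return (D \<Otimes>\<^sub>M T) (g x, t)))) (A \<times> space T)
       = measure P {x\<in>space P. g x \<in> A}"
  unfolding measure_def using emeasure_bind_return_pair[OF assms] by simp

lemma space_data_dist: "space (data_dist \<pi> N) = PiE {..<N} (\<lambda>_. space \<pi>)"
  unfolding data_dist_def by (simp add: space_PiM)

lemma prob_space_data_dist: "prob_space \<pi> \<Longrightarrow> prob_space (data_dist \<pi> N)"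
  unfolding data_dist_def by (rule prob_space_PiM)

definition some_sample_in :: "'a measure \<Rightarrow> nat \<Rightarrow> 'a set \<Rightarrow> (nat \<Rightarrow> 'a) set" where
  "some_sample_in \<pi> N S = {D\<in>space (data_dist \<pi> N). \<exists>i<N. D i \<in> S}"

lemma some_sample_in_eq_compl_PiE:
  "some_sample_in \<pi> N S = space (data_dist \<pi> N) - PiE {..<N} (\<lambda>_. space \<pi> - S)"
  unfolding some_sample_in_def by (auto simp: space_data_dist PiE_def Pi_def extensional_def)

lemma sets_some_sample_in:
  assumes "S \<in> sets \<pi>"
  shows "some_sample_in \<pi> N S \<in> sets (data_dist \<pi> N)"
proof -
  have "PiE {..<N} (\<lambda>_. space \<pi> - S) \<in> sets (data_dist \<pi> N)"
    unfolding data_dist_def using assms by (intro sets_PiM_I_finite) auto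
  then show ?thesis unfolding some_sample_in_eq_compl_PiE by auto
qed

lemma measure_some_sample_in:
  assumes "prob_space \<pi>" and S: "S \<in> sets \<pi>"
  shows "measure (data_dist \<pi> N) (some_sample_in \<pi> N S) = 1 - (1 - measure \<pi> S) ^ N"
proof -
  interpret prob_space \<pi> by fact
  interpret product_sigma_finite "\<lambda>_. \<pi>" by standard
  have none_in: "PiE {..<N} (\<lambda>_. space \<pi> - S) \<in> sets (data_dist \<pi> N)"
    unfolding data_dist_def using S by (intro sets_PiM_I_finite) auto
  have "emeasure (data_dist \<pi> N) (PiE {..<N} (\<lambda>_. space \<pi> - S)) = (\<Prod>i<N. emeasure \<pi> (space \<pi> - S))"
    unfolding data_dist_def using S by (intro emeasure_PiM) auto
  also have "\<dots> = ennreal ((1 - measure \<pi> S) ^ N)"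
    using S by (simp add: emeasure_eq_measure prob_compl ennreal_power)
  finally have "measure (data_dist \<pi> N) (PiE {..<N} (\<lambda>_. space \<pi> - S)) = (1 - measure \<pi> S) ^ N"
    unfolding measure_def using prob_le_1[of S, unfolded measure_def] by simp
  then show ?thesis
    unfolding some_sample_in_eq_compl_PiE
    using prob_space.prob_compl[OF prob_space_data_dist[OF \<open>prob_space \<pi>\<close>] none_in] by simp
qed

lemma measure_some_sample_in_tendsto_1:
  assumes "prob_space \<pi>" "S \<in> sets \<pi>" "0 < measure \<pi> S"
  shows "(\<lambda>N. measure (data_dist \<pi> N) (some_sample_in \<pi> N S)) \<longlonglongrightarrow> 1"
proof -
  have "norm (1 - measure \<pi> S) < 1"
    using assms prob_space.prob_le_1[of \<pi> S] by simp
  then have "(\<lambda>N. 1 - (1 - measure \<pi> S) ^ N) \<longlonglongrightarrow> 1 - 0"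
    by (intro tendsto_intros)
  then show ?thesis by (simp add: measure_some_sample_in[OF assms(1,2)])
qed

lemma min_err_const_attack_event:
  assumes "0 < N"
  shows "{(D, \<theta>) \<in> space (data_dist \<pi> N \<Otimes>\<^sub>M \<Theta>). min_err l N D z < \<tau>}
       = some_sample_in \<pi> N {x\<in>space \<pi>. l x z < \<tau>} \<times> space \<Theta>"
proof -
  have "min_err l N D z < \<tau> \<longleftrightarrow> (\<exists>i<N. l (D i) z < \<tau>)" for D
    unfolding min_err_def using assms by (subst Min_less_iff) auto
  then show ?thesis
    by (auto simp: some_sample_in_def space_pair_measure space_data_dist PiE_iff)
qed

lemma TPR_cum_const_attack:
  assumes "prob_space \<pi>" and err_meas: "(\<lambda>x. l x z) \<in> borel_measurable \<pi>"
    and kernel: "M N \<in> measurable (data_dist \<pi> N) (prob_algebra \<Theta>)" and "0 < N"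
  shows "TPR_cum \<pi> \<Theta> M (\<lambda>_. z) l N \<tau>
       = measure (data_dist \<pi> N) (some_sample_in \<pi> N {x\<in>space \<pi>. l x z < \<tau>})"
    (is "_ = measure ?D ?A")
proof -
  have A: "?A \<in> sets ?D"
    using err_meas by (intro sets_some_sample_in) measurable
  have "TPR_cum \<pi> \<Theta> M (\<lambda>_. z) l N \<tau> = measure ?D {D\<in>space ?D. D \<in> ?A}"
    unfolding TPR_cum_def min_err_const_attack_event[OF \<open>0 < N\<close>]
    by (rule measure_bind_return_pair[OF prob_space_data_dist[OF \<open>prob_space \<pi>\<close>] kernel
          measurable_ident_sets[OF refl] A])
  also have "{D\<in>space ?D. D \<in> ?A} = ?A"
    using sets.sets_into_space[OF A] by blast
  finally show ?thesis .
qed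

lemma FPR_cum_const_attack:
  assumes "prob_space \<pi>" and err_meas: "(\<lambda>x. l x z) \<in> borel_measurable \<pi>"
    and kernel: "M N \<in> measurable (data_dist \<pi> N) (prob_algebra \<Theta>)" and "0 < N"
  shows "FPR_cum \<pi> \<Theta> M (\<lambda>_. z) l N \<tau>
       = measure (data_dist \<pi> N) (some_sample_in \<pi> N {x\<in>space \<pi>. l x z < \<tau>})"
    (is "_ = measure ?D ?A")
proof -
  have D: "prob_space ?D" using \<open>prob_space \<pi>\<close> by (rule prob_space_data_dist)
  have A: "?A \<in> sets ?D"
    using err_meas by (intro sets_some_sample_in) measurable
  have split_pair: "(\<lambda>(D, D'). M N D' \<bind> (\<lambda>\<theta>. return (?D \<Otimes>\<^sub>M \<Theta>) (D, \<theta>)))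
      = (\<lambda>x. (M N \<circ> snd) x \<bind> (\<lambda>\<theta>. return (?D \<Otimes>\<^sub>M \<Theta>) (fst x, \<theta>)))"
    by (simp add: fun_eq_iff split_beta)
  have "FPR_cum \<pi> \<Theta> M (\<lambda>_. z) l N \<tau> = measure (?D \<Otimes>\<^sub>M ?D) {x\<in>space (?D \<Otimes>\<^sub>M ?D). fst x \<in> ?A}"
    unfolding FPR_cum_def min_err_const_attack_event[OF \<open>0 < N\<close>] split_pair
    by (rule measure_bind_return_pair[OF prob_space_pair[OF D D] measurable_comp[OF measurable_snd kernel]
          measurable_fst A])
  also have "{x\<in>space (?D \<Otimes>\<^sub>M ?D). fst x \<in> ?A} = ?A \<times> space ?D"
    using sets.sets_into_space[OF A] by (auto simp: space_pair_measure)
  also have "measure (?D \<Otimes>\<^sub>M ?D) (?A \<times> space ?D) = measure ?D ?A"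
    using sigma_finite_measure.emeasure_pair_measure_Times[OF prob_space_imp_sigma_finite[OF D] A sets.top]
    by (simp add: measure_def prob_space.emeasure_space_1[OF D])
  finally show ?thesis .
qed

theorem lemma1:
  fixes Z :: "'a::euclidean_space set"
    and \<pi> :: "'a measure"
    and l :: "'a \<Rightarrow> 'a \<Rightarrow> real"
    and \<Theta> :: "'b measure"
    and M :: "nat \<Rightarrow> (nat \<Rightarrow> 'a) \<Rightarrow> 'b measure"
    and Z0 :: 'a
  assumes prob: "prob_space \<pi>"
    and space_pi: "space \<pi> = Z"
    and sets_pi: "sets \<pi> = sets (restrict_space borel Z)"
    and l_range: "\<forall>x\<in>Z. \<forall>y\<in>Z. 0 \<le> l x y \<and> l x y \<le> 1"
    and l_meas: "(\<lambda>(x, y). l x y) \<in> borel_measurable (\<pi> \<Otimes>\<^sub>M \<pi>)"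
    and M_kernel: "\<forall>N. M N \<in> measurable (data_dist \<pi> N) (prob_algebra \<Theta>)"
    and Z0: "Z0 \<in> Z"
    and kappa_bounds: "\<forall>\<tau>\<in>{0<..<1}. 0 < kappa \<pi> l \<tau> Z0 \<and> kappa \<pi> l \<tau> Z0 < 1"
  shows "\<forall>\<tau>\<in>{0<..<1}.
           (\<lambda>N. TPR_cum \<pi> \<Theta> M (\<lambda>_. Z0) l N \<tau>) \<longlonglongrightarrow> 1 \<and>
           (\<lambda>N. FPR_cum \<pi> \<Theta> M (\<lambda>_. Z0) l N \<tau>) \<longlonglongrightarrow> 1"
proof (intro ballI conjI)
  fix \<tau> :: real assume \<tau>: "\<tau> \<in> {0<..<1}"
  interpret prob_space \<pi> by (rule prob)
  have err_meas: "(\<lambda>z. l z Z0) \<in> borel_measurable \<pi>"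
    using measurable_Pair1[OF l_meas, of Z0] Z0 space_pi by simp
  define S where "S = {z\<in>space \<pi>. l z Z0 < \<tau>}"
  have S: "S \<in> sets \<pi>" unfolding S_def using err_meas by measurable
  have "0 < kappa \<pi> l (\<tau>/2) Z0" using kappa_bounds \<tau> by auto
  also have "kappa \<pi> l (\<tau>/2) Z0 \<le> measure \<pi> S"
    unfolding kappa_def using \<tau> S by (intro finite_measure_mono) (auto simp: S_def)
  finally have hits: "(\<lambda>N. measure (data_dist \<pi> N) (some_sample_in \<pi> N S)) \<longlonglongrightarrow> 1"
    by (intro measure_some_sample_in_tendsto_1 prob S)
  show "(\<lambda>N. TPR_cum \<pi> \<Theta> M (\<lambda>_. Z0) l N \<tau>) \<longlonglongrightarrow> 1"
    using hits by (rule Lim_transform_eventually)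
      (auto intro!: eventually_sequentiallyI[of 1]
        simp: TPR_cum_const_attack[where l = l and z = Z0, OF prob err_meas M_kernel[rule_format]] S_def)
  show "(\<lambda>N. FPR_cum \<pi> \<Theta> M (\<lambda>_. Z0) l N \<tau>) \<longlonglongrightarrow> 1"
    using hits by (rule Lim_transform_eventually)
      (auto intro!: eventually_sequentiallyI[of 1]
        simp: FPR_cum_const_attack[where l = l and z = Z0, OF prob err_meas M_kernel[rule_format]] S_def)
qed

end
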